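(* Let $\pi_0$ be a portfolio map generated by $\Phi_0$, and let $p_0\in\Delta_n$ be a point at which $\Phi_0$ is differentiable. For every $\epsilon>0$ and every compact neighborhood $K$ of $p_0$ in $\Delta_n$, there exists $\delta>0$ such that whenever $\pi$ is a portfolio map generated by $\Phi$ with $\max_{p\in K}|\Phi(p)-\Phi_0(p)|<\delta$, we have $\sup_{p\in\Delta_n:|p-p_0|<\delta}|\pi(p)-\pi_0(p_0)|<\epsilon$.
   Context: $\Delta_n=\{p\in(0,1)^n:\sum p_i=1\}$, $\overline{\Delta}_n$ its closure, $n\ge2$; $|\cdot|$ is the Euclidean norm. A map $\pi:\Delta_n\to\overline{\Delta}_n$ is generated by a concave function $\Phi:\Delta_n\to(0,\infty)$ if $\sum_i\pi_i(p)\frac{q_i}{p_i}\ge\frac{\Phi(q)}{\Phi(p)}$ for all $p,q\in\Delta_n$. *)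

theory Defs
  imports "HOL-Analysis.Analysis"
begin

definition std_simplex :: "(real ^ 'n) set" where
  "std_simplex = {p. (\<forall>i. 0 < p $ i \<and> p $ i < 1) \<and> (\<Sum>i\<in>UNIV. p $ i) = 1}"

definition std_simplex_cl :: "(real ^ 'n) set" where
  "std_simplex_cl = {p. (\<forall>i. 0 \<le> p $ i) \<and> (\<Sum>i\<in>UNIV. p $ i) = 1}"

definition generated_by :: "(real ^ 'n \<Rightarrow> real ^ 'n) \<Rightarrow> (real ^ 'n \<Rightarrow> real) \<Rightarrow> bool" where
  "generated_by \<pi> \<Phi> \<longleftrightarrow>
     (\<forall>p\<in>std_simplex. \<pi> p \<in> std_simplex_cl) \<and>
     concave_on std_simplex \<Phi> \<and>
     (\<forall>p\<in>std_simplex. 0 < \<Phi> p) \<and>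
     (\<forall>p\<in>std_simplex. \<forall>q\<in>std_simplex.
        (\<Sum>i\<in>UNIV. \<pi> p $ i * (q $ i / p $ i)) \<ge> \<Phi> q / \<Phi> p)"

end

theory Submission
  imports Defs
begin

text \<open>The generating inequality says that q \<mapsto> \<Sum>_k \<Phi>(p) \<pi>_k(p) / p_k q_k is an affine
  majorant of \<Phi> touching it at p, so \<pi>(p) is read off a supergradient of \<Phi> at p.
  If \<Phi> is uniformly close to \<Phi>0 near p0 and p is close to p0, these affine functions
  almost majorize \<Phi>0 and almost touch it at p0; differentiability of \<Phi>0 at p0 then forces
  their slopes along the simplex to be close to the derivative of \<Phi>0, and hence \<pi>(p)
  to be close to the portfolio determined by that derivative, which is \<pi>0(p0).\<close>

definition support_vector :: "(real ^ 'n \<Rightarrow> real ^ 'n) \<Rightarrow> (real ^ 'n \<Rightarrow> real) \<Rightarrow> real ^ 'n \<Rightarrow> real ^ 'n"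
  where "support_vector \<pi> \<Phi> p = (\<chi> k. \<Phi> p * \<pi> p $ k / p $ k)"

text \<open>With L the derivative of \<Phi> at p, the k-th weight is the familiar
  p_k (1 + D_(e_k - p) log \<Phi>(p)) of a functionally generated portfolio.\<close>

definition derivative_portfolio :: "(real ^ 'n \<Rightarrow> real) \<Rightarrow> (real ^ 'n \<Rightarrow> real) \<Rightarrow> real ^ 'n \<Rightarrow> real ^ 'n"
  where "derivative_portfolio \<Phi> L p = (\<chi> k. p $ k * (\<Phi> p + L (axis k 1 - p)) / \<Phi> p)"

lemma std_simplex_pos: "p \<in> std_simplex \<Longrightarrow> 0 < p $ k"
  by (simp add: std_simplex_def)

lemma generated_by_pos: "generated_by \<pi> \<Phi> \<Longrightarrow> p \<in> std_simplex \<Longrightarrow> 0 < \<Phi> p"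
  by (simp add: generated_by_def)

lemma generated_by_component_bounds:
  assumes "generated_by \<pi> \<Phi>" "p \<in> std_simplex"
  shows "0 \<le> \<pi> p $ k" "\<pi> p $ k \<le> 1"
proof -
  have cl: "\<pi> p \<in> std_simplex_cl" using assms unfolding generated_by_def by auto
  then show "0 \<le> \<pi> p $ k" unfolding std_simplex_cl_def by auto
  have "\<pi> p $ k \<le> (\<Sum>i\<in>UNIV. \<pi> p $ i)"
    by (rule member_le_sum) (use cl in \<open>auto simp: std_simplex_cl_def\<close>)
  then show "\<pi> p $ k \<le> 1" using cl by (simp add: std_simplex_cl_def)
qed

lemma support_vector_majorant:
  assumes "generated_by \<pi> \<Phi>" "p \<in> std_simplex" "q \<in> std_simplex"
  shows "\<Phi> q \<le> support_vector \<pi> \<Phi> p \<bullet> q"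
proof -
  have "\<Phi> q / \<Phi> p \<le> (\<Sum>i\<in>UNIV. \<pi> p $ i * (q $ i / p $ i))"
    using assms unfolding generated_by_def by auto
  then have "\<Phi> q \<le> \<Phi> p * (\<Sum>i\<in>UNIV. \<pi> p $ i * (q $ i / p $ i))"
    using generated_by_pos[OF assms(1,2)] by (simp add: divide_le_eq mult.commute)
  also have "\<dots> = support_vector \<pi> \<Phi> p \<bullet> q"
    by (simp add: support_vector_def inner_vec_def sum_distrib_left mult.assoc)
  finally show ?thesis .
qed

lemma inner_support_vector_self:
  assumes "generated_by \<pi> \<Phi>" "p \<in> std_simplex"
  shows "support_vector \<pi> \<Phi> p \<bullet> p = \<Phi> p"
proof -
  have "support_vector \<pi> \<Phi> p \<bullet> p = \<Phi> p * (\<Sum>i\<in>UNIV. \<pi> p $ i)"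
    using std_simplex_pos[OF assms(2)]
    by (simp add: support_vector_def inner_vec_def sum_distrib_left less_imp_neq[symmetric])
  also have "\<dots> = \<Phi> p"
    using assms unfolding generated_by_def std_simplex_cl_def by auto
  finally show ?thesis .
qed

lemma support_vector_bounds:
  assumes "generated_by \<pi> \<Phi>" "p \<in> std_simplex"
  shows "0 \<le> support_vector \<pi> \<Phi> p $ k" "support_vector \<pi> \<Phi> p $ k \<le> \<Phi> p / p $ k"
  using generated_by_component_bounds[OF assms, of k] generated_by_pos[OF assms]
    std_simplex_pos[OF assms(2), of k]
  by (auto simp: support_vector_def intro!: divide_right_mono mult_left_le)

lemma portfolio_eq_support_vector:
  assumes "generated_by \<pi> \<Phi>" "p \<in> std_simplex"
  shows "\<pi> p $ k = p $ k * support_vector \<pi> \<Phi> p $ k / \<Phi> p"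
  using generated_by_pos[OF assms] std_simplex_pos[OF assms(2), of k]
  by (simp add: support_vector_def)

lemma std_simplex_margin:
  assumes "p \<in> std_simplex"
  obtains m where "m > 0" "\<And>k. m \<le> p $ k" "\<And>k. m \<le> 1 - p $ k"
proof -
  let ?m = "Min (range (\<lambda>k. min (p $ k) (1 - p $ k)))"
  have "?m \<in> range (\<lambda>k. min (p $ k) (1 - p $ k))" by (intro Min_in) auto
  then have "?m > 0" using assms unfolding std_simplex_def by auto
  moreover have "?m \<le> min (p $ k) (1 - p $ k)" for k by (rule Min_le) auto
  ultimately show ?thesis using that by (meson min.boundedE)
qed

lemma std_simplex_translate_small:
  assumes p: "p \<in> std_simplex" and v: "(\<Sum>i\<in>UNIV. v $ i) = 0"
  obtains t where "t > 0" "\<And>s. \<bar>s\<bar> < t \<Longrightarrow> p + s *\<^sub>R v \<in> std_simplex"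
proof -
  obtain m where m: "m > 0" "\<And>k. m \<le> p $ k" "\<And>k. m \<le> 1 - p $ k"
    using std_simplex_margin[OF p] by blast
  define t where "t = m / (norm v + 1)"
  have nv: "0 < norm v + 1" using norm_ge_zero[of v] by linarith
  have "p + s *\<^sub>R v \<in> std_simplex" if s: "\<bar>s\<bar> < t" for s
  proof -
    have small: "\<bar>s * v $ k\<bar> < m" for k
    proof -
      have "\<bar>s * v $ k\<bar> \<le> \<bar>s\<bar> * (norm v + 1)"
        using component_le_norm_cart[of v k] by (simp add: abs_mult mult_left_mono)
      also have "\<dots> < m"
        using s nv by (simp add: t_def pos_less_divide_eq)
      finally show ?thesis .
    qed
    have "0 < (p + s *\<^sub>R v) $ k \<and> (p + s *\<^sub>R v) $ k < 1" for k
      using small[of k] m(2,3)[of k] by (simp add: abs_less_iff)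
    moreover have "(\<Sum>i\<in>UNIV. (p + s *\<^sub>R v) $ i) = 1"
      using p v by (simp add: std_simplex_def sum.distrib sum_distrib_left[symmetric])
    ultimately show ?thesis unfolding std_simplex_def by blast
  qed
  moreover have "t > 0" using m nv by (simp add: t_def)
  ultimately show ?thesis using that by blast
qed

lemma affine_majorants_slope_tendsto:
  fixes c :: "'a \<Rightarrow> real ^ 'n" and \<Phi>0 :: "real ^ 'n \<Rightarrow> real"
  assumes p0: "p0 \<in> std_simplex"
    and der: "(\<Phi>0 has_derivative L) (at p0 within std_simplex)"
    and r: "r > 0"
    and major: "\<And>\<gamma>. \<gamma> > 0 \<Longrightarrow>
      \<forall>\<^sub>F m in F. \<forall>q\<in>ball p0 r \<inter> std_simplex. \<Phi>0 q - \<gamma> \<le> c m \<bullet> q"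
    and touch: "((\<lambda>m. c m \<bullet> p0) \<longlongrightarrow> \<Phi>0 p0) F"
    and v: "(\<Sum>i\<in>UNIV. v $ i) = 0"
  shows "((\<lambda>m. c m \<bullet> v) \<longlongrightarrow> L v) F"
  unfolding tendsto_iff dist_real_def
proof (intro allI impI)
  fix \<gamma> :: real assume \<gamma>: "\<gamma> > 0"
  define N where "N = norm v + 1"
  have N: "N > 0" "norm v < N" unfolding N_def using norm_ge_zero[of v] by linarith+
  obtain t0 where t0: "t0 > 0" "\<And>s. \<bar>s\<bar> < t0 \<Longrightarrow> p0 + s *\<^sub>R v \<in> std_simplex"
    using std_simplex_translate_small[OF p0 v] by blast
  have "\<gamma> / (4 * N) > 0" using \<gamma> N(1) by simp
  then obtain d where d: "d > 0" and dd: "\<forall>y\<in>std_simplex. norm (y - p0) < d \<longrightarrow>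
      norm (\<Phi>0 y - \<Phi>0 p0 - L (y - p0)) \<le> \<gamma> / (4 * N) * norm (y - p0)"
    using der unfolding has_derivative_within_alt by blast
  define t where "t = min (t0 / 2) (min d r / N)"
  have t: "t > 0" "t < t0" "t * N \<le> min d r"
    using t0 d r N(1) by (auto simp: t_def min_def field_simps)
  txt \<open>Compare the almost-majorant at p0 \<pm> t v with the first-order expansion of \<Phi>0.\<close>
  have one_sided: "\<forall>\<^sub>F m in F. \<sigma> * (c m \<bullet> v - L v) > - \<gamma> / 2" if \<sigma>: "\<bar>\<sigma>\<bar> = 1" for \<sigma>
  proof -
    define q where "q = p0 + (\<sigma> * t) *\<^sub>R v"
    have qS: "q \<in> std_simplex"
      unfolding q_def using \<sigma> t by (intro t0(2)) (simp add: abs_mult)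
    have nq: "norm (q - p0) = t * norm v"
      unfolding q_def using \<sigma> t by (simp add: abs_mult)
    have "t * norm v < min d r"
      using mult_strict_left_mono[OF N(2) t(1)] t(3) by linarith
    then have qB: "q \<in> ball p0 r" and qd: "norm (q - p0) < d"
      using nq by (auto simp: dist_norm norm_minus_commute)
    have "norm (\<Phi>0 q - \<Phi>0 p0 - L (q - p0)) \<le> \<gamma> / (4 * N) * (t * norm v)"
      using dd qS qd nq by auto
    also have "\<dots> \<le> \<gamma> / (4 * N) * (t * N)"
      using \<gamma> t(1) N by (intro mult_left_mono) auto
    also have "\<dots> = \<gamma> * t / 4"
      using N(1) by simp
    finally have "- (\<Phi>0 q - \<Phi>0 p0 - L (q - p0)) \<le> \<gamma> * t / 4"
      unfolding real_norm_def by (rule abs_le_D2)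
    moreover have "L (q - p0) = \<sigma> * t * L v"
      using linear_scale[OF has_derivative_linear[OF der]] by (simp add: q_def)
    ultimately have lower: "\<Phi>0 q \<ge> \<Phi>0 p0 + \<sigma> * t * L v - \<gamma> * t / 4"
      by linarith
    have inner_q: "c m \<bullet> q = c m \<bullet> p0 + \<sigma> * t * (c m \<bullet> v)" for m
      by (simp add: q_def inner_add_right)
    have "\<forall>\<^sub>F m in F. \<Phi>0 q - \<gamma> * t / 8 \<le> c m \<bullet> q"
      using major[of "\<gamma> * t / 8"] \<gamma> t qB qS by (auto elim: eventually_mono)
    moreover have "\<forall>\<^sub>F m in F. \<bar>c m \<bullet> p0 - \<Phi>0 p0\<bar> < \<gamma> * t / 8"
      using touch[unfolded tendsto_iff dist_real_def, rule_format, of "\<gamma> * t / 8"] \<gamma> t(1) by simp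
    ultimately have "\<forall>\<^sub>F m in F. \<sigma> * t * (c m \<bullet> v) - \<sigma> * t * L v > - (\<gamma> * t / 2)"
    proof eventually_elim
      case (elim m)
      then show ?case using lower inner_q[of m] by linarith
    qed
    then show ?thesis
    proof eventually_elim
      case (elim m)
      then have "t * (\<sigma> * (c m \<bullet> v - L v)) > t * (- \<gamma> / 2)"
        by (simp add: algebra_simps)
      then show ?case by (rule mult_less_cancel_left_pos[OF t(1), THEN iffD1])
    qed
  qed
  have "\<forall>\<^sub>F m in F. - \<gamma> / 2 < c m \<bullet> v - L v" using one_sided[of 1] by simp
  moreover have "\<forall>\<^sub>F m in F. - \<gamma> / 2 < - (c m \<bullet> v - L v)" using one_sided[of "-1"] by simp
  ultimately show "\<forall>\<^sub>F m in F. \<bar>c m \<bullet> v - L v\<bar> < \<gamma>"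
  proof eventually_elim
    case (elim m)
    then show ?case using \<gamma> by linarith
  qed
qed

lemma generated_portfolios_tendsto:
  fixes \<pi>s :: "'a \<Rightarrow> real ^ 'n \<Rightarrow> real ^ 'n" and \<Phi>s :: "'a \<Rightarrow> real ^ 'n \<Rightarrow> real"
    and ps :: "'a \<Rightarrow> real ^ 'n" and \<Phi>0 :: "real ^ 'n \<Rightarrow> real"
  assumes p0: "p0 \<in> std_simplex"
    and der: "(\<Phi>0 has_derivative L) (at p0 within std_simplex)"
    and \<Phi>0_pos: "\<Phi>0 p0 > 0"
    and r: "r > 0"
    and gen: "\<forall>\<^sub>F m in F. generated_by (\<pi>s m) (\<Phi>s m) \<and> ps m \<in> std_simplex"
    and close: "\<And>\<gamma>. \<gamma> > 0 \<Longrightarrow>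
      \<forall>\<^sub>F m in F. \<forall>q\<in>ball p0 r \<inter> std_simplex. \<bar>\<Phi>s m q - \<Phi>0 q\<bar> < \<gamma>"
    and lim: "(ps \<longlongrightarrow> p0) F"
  shows "((\<lambda>m. \<pi>s m (ps m)) \<longlongrightarrow> derivative_portfolio \<Phi>0 L p0) F"
proof -
  define g where "g m = support_vector (\<pi>s m) (\<Phi>s m) (ps m)" for m
  have near: "\<forall>\<^sub>F m in F. ps m \<in> ball p0 r"
    using lim r by (intro topological_tendstoD) auto
  have value_lim: "((\<lambda>m. \<Phi>s m (ps m)) \<longlongrightarrow> \<Phi>0 p0) F"
  proof -
    have "((\<lambda>m. \<Phi>s m (ps m) - \<Phi>0 (ps m)) \<longlongrightarrow> 0) F"
      unfolding tendsto_iff dist_real_def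
    proof (intro allI impI)
      fix \<gamma> :: real assume "\<gamma> > 0"
      from close[OF this] gen near show "\<forall>\<^sub>F m in F. \<bar>\<Phi>s m (ps m) - \<Phi>0 (ps m) - 0\<bar> < \<gamma>"
        by eventually_elim auto
    qed
    moreover have "((\<lambda>m. \<Phi>0 (ps m)) \<longlongrightarrow> \<Phi>0 p0) F"
      using gen by (intro continuous_within_tendsto_compose[OF has_derivative_continuous[OF der] _ lim])
        (auto elim: eventually_mono)
    ultimately show ?thesis using tendsto_add by fastforce
  qed
  have drift: "((\<lambda>m. g m \<bullet> (p0 - ps m)) \<longlongrightarrow> 0) F"
    unfolding inner_vec_def
  proof (rule tendsto_null_sum)
    fix k
    have "((\<lambda>m. \<Phi>s m (ps m) / ps m $ k * \<bar>p0 $ k - ps m $ k\<bar>) \<longlongrightarrow> \<Phi>0 p0 / p0 $ k * \<bar>p0 $ k - p0 $ k\<bar>) F"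
      using std_simplex_pos[OF p0, of k] by (intro tendsto_intros value_lim tendsto_vec_nth lim) auto
    then have bound_lim: "((\<lambda>m. \<Phi>s m (ps m) / ps m $ k * \<bar>p0 $ k - ps m $ k\<bar>) \<longlongrightarrow> 0) F"
      by simp
    have "\<forall>\<^sub>F m in F. norm (g m $ k \<bullet> (p0 - ps m) $ k) \<le> \<Phi>s m (ps m) / ps m $ k * \<bar>p0 $ k - ps m $ k\<bar>"
      using gen
    proof eventually_elim
      case (elim m)
      then show ?case
        using support_vector_bounds[of "\<pi>s m" "\<Phi>s m" "ps m" k]
        by (simp add: g_def abs_mult mult_right_mono del: times_divide_eq_left)
    qed
    from Lim_null_comparison[OF this bound_lim]
    show "((\<lambda>m. g m $ k \<bullet> (p0 - ps m) $ k) \<longlongrightarrow> 0) F" .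
  qed
  have touch: "((\<lambda>m. g m \<bullet> p0) \<longlongrightarrow> \<Phi>0 p0) F"
  proof (rule Lim_transform_eventually)
    show "((\<lambda>m. \<Phi>s m (ps m) + g m \<bullet> (p0 - ps m)) \<longlongrightarrow> \<Phi>0 p0) F"
      using tendsto_add[OF value_lim drift] by simp
    show "\<forall>\<^sub>F m in F. \<Phi>s m (ps m) + g m \<bullet> (p0 - ps m) = g m \<bullet> p0"
      using gen by eventually_elim (simp add: g_def inner_diff_right inner_support_vector_self)
  qed
  have major: "\<forall>\<^sub>F m in F. \<forall>q\<in>ball p0 r \<inter> std_simplex. \<Phi>0 q - \<gamma> \<le> g m \<bullet> q" if "\<gamma> > 0" for \<gamma>
    using close[OF that] gen
  proof eventually_elim
    case (elim m)
    show ?case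
    proof
      fix q assume q: "q \<in> ball p0 r \<inter> std_simplex"
      then have "\<Phi>0 q - \<gamma> < \<Phi>s m q" using elim(1) by force
      also have "\<dots> \<le> g m \<bullet> q"
        using elim(2) q unfolding g_def by (intro support_vector_majorant) auto
      finally show "\<Phi>0 q - \<gamma> \<le> g m \<bullet> q" by simp
    qed
  qed
  have coord: "((\<lambda>m. g m $ k) \<longlongrightarrow> \<Phi>0 p0 + L (axis k 1 - p0)) F" for k
  proof -
    have "(\<Sum>i\<in>UNIV. (axis k 1 - p0) $ i) = 0"
      using p0 by (simp add: std_simplex_def sum_subtractf axis_def)
    from tendsto_add[OF touch affine_majorants_slope_tendsto[OF p0 der r major touch this]]
    show ?thesis by (simp add: inner_diff_right inner_axis)
  qed
  show ?thesis
  proof (rule vec_tendstoI)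
    fix k
    have "((\<lambda>m. ps m $ k * g m $ k / \<Phi>s m (ps m)) \<longlongrightarrow> p0 $ k * (\<Phi>0 p0 + L (axis k 1 - p0)) / \<Phi>0 p0) F"
      using \<Phi>0_pos by (intro tendsto_intros tendsto_vec_nth lim coord value_lim) auto
    moreover have "\<forall>\<^sub>F m in F. ps m $ k * g m $ k / \<Phi>s m (ps m) = \<pi>s m (ps m) $ k"
      using gen by eventually_elim (auto simp: g_def portfolio_eq_support_vector)
    ultimately show "((\<lambda>m. \<pi>s m (ps m) $ k) \<longlongrightarrow> derivative_portfolio \<Phi>0 L p0 $ k) F"
      by (simp add: derivative_portfolio_def Lim_transform_eventually)
  qed
qed

lemma eventually_INF_principal_pos:
  fixes T :: "real \<Rightarrow> 'a set"
  assumes mono: "\<And>a b. 0 < a \<Longrightarrow> a \<le> b \<Longrightarrow> T a \<subseteq> T b"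
  shows "eventually P (INF \<delta>\<in>{0<..}. principal (T \<delta>)) \<longleftrightarrow> (\<exists>\<delta>>0. \<forall>x\<in>T \<delta>. P x)"
proof (subst eventually_INF_base)
  show "\<exists>c\<in>{0<..}. principal (T c) \<le> inf (principal (T a)) (principal (T b))"
    if "a \<in> {0<..}" "b \<in> {0<..}" for a b
    using that mono[of "min a b" a] mono[of "min a b" b] by (intro bexI[of _ "min a b"]) auto
qed (auto simp: eventually_principal)

lemma generated_portfolio_eq_derivative_portfolio:
  assumes gen: "generated_by \<pi> \<Phi>" and p: "p \<in> std_simplex"
    and der: "(\<Phi> has_derivative L) (at p within std_simplex)"
  shows "\<pi> p = derivative_portfolio \<Phi> L p"
proof -
  have "((\<lambda>_::nat. \<pi> p) \<longlongrightarrow> derivative_portfolio \<Phi> L p) sequentially"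
    using generated_portfolios_tendsto[OF p der generated_by_pos[OF gen p] zero_less_one,
        where \<pi>s = "\<lambda>_. \<pi>" and \<Phi>s = "\<lambda>_. \<Phi>" and ps = "\<lambda>_. p"] gen p
    by simp
  then show ?thesis by (simp add: LIMSEQ_const_iff)
qed

lemma generated_portfolios_uniformly_close:
  fixes \<Phi>0 :: "real ^ 'n \<Rightarrow> real"
  assumes p0: "p0 \<in> std_simplex"
    and der: "(\<Phi>0 has_derivative L) (at p0 within std_simplex)"
    and \<Phi>0_pos: "\<Phi>0 p0 > 0"
    and r: "r > 0" "ball p0 r \<inter> std_simplex \<subseteq> K"
    and \<epsilon>: "\<epsilon> > 0"
  obtains \<delta> where "\<delta> > 0"
    "\<And>(\<pi> :: real ^ 'n \<Rightarrow> real ^ 'n) \<Phi> p. generated_by \<pi> \<Phi> \<Longrightarrow> \<forall>q\<in>K. \<bar>\<Phi> q - \<Phi>0 q\<bar> < \<delta> \<Longrightarrow>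
      p \<in> std_simplex \<Longrightarrow> norm (p - p0) < \<delta> \<Longrightarrow> dist (\<pi> p) (derivative_portfolio \<Phi>0 L p0) < \<epsilon>"
proof -
  define T where "T \<delta> = {(\<pi> :: real ^ 'n \<Rightarrow> real ^ 'n, \<Phi>, p). generated_by \<pi> \<Phi>
      \<and> (\<forall>q\<in>K. \<bar>\<Phi> q - \<Phi>0 q\<bar> < \<delta>) \<and> p \<in> std_simplex \<and> norm (p - p0) < \<delta>}" for \<delta>
  txt \<open>Convergence along F, whose basic sets are the T \<delta>, is exactly the uniform statement.\<close>
  define F where "F = (INF \<delta>\<in>{0<..}. principal (T \<delta>))"
  have eventually_F: "eventually P F \<longleftrightarrow> (\<exists>\<delta>>0. \<forall>x\<in>T \<delta>. P x)" for P
    unfolding F_def by (rule eventually_INF_principal_pos) (force simp: T_def)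
  have "((\<lambda>x. fst x (snd (snd x))) \<longlongrightarrow> derivative_portfolio \<Phi>0 L p0) F"
  proof (rule generated_portfolios_tendsto[OF p0 der \<Phi>0_pos r(1),
        where \<pi>s = fst and \<Phi>s = "\<lambda>x. fst (snd x)" and ps = "\<lambda>x. snd (snd x)"])
    show "\<forall>\<^sub>F x in F. generated_by (fst x) (fst (snd x)) \<and> snd (snd x) \<in> std_simplex"
      unfolding eventually_F by (auto simp: T_def intro!: exI[of _ 1])
    show "\<forall>\<^sub>F x in F. \<forall>q\<in>ball p0 r \<inter> std_simplex. \<bar>fst (snd x) q - \<Phi>0 q\<bar> < \<gamma>" if "\<gamma> > 0" for \<gamma>
      unfolding eventually_F using that r(2) by (auto simp: T_def intro!: exI[of _ \<gamma>])
    show "((\<lambda>x. snd (snd x)) \<longlongrightarrow> p0) F"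
      unfolding tendsto_iff eventually_F by (auto simp: T_def dist_norm intro!: exI)
  qed
  then obtain \<delta> where "\<delta> > 0" "\<forall>x\<in>T \<delta>. dist (fst x (snd (snd x))) (derivative_portfolio \<Phi>0 L p0) < \<epsilon>"
    using \<epsilon> unfolding tendsto_iff eventually_F by blast
  then show ?thesis using that by (auto simp: T_def)
qed

theorem lemma4p7:
  fixes \<pi>0 :: "real ^ 'n \<Rightarrow> real ^ 'n" and \<Phi>0 :: "real ^ 'n \<Rightarrow> real"
    and p0 :: "real ^ 'n" and K :: "(real ^ 'n) set" and \<epsilon> :: real
  assumes n2: "CARD('n) \<ge> 2"
    and gen0: "generated_by \<pi>0 \<Phi>0"
    and p0: "p0 \<in> std_simplex"
    and diff: "\<Phi>0 differentiable (at p0 within std_simplex)"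
    and eps: "\<epsilon> > 0"
    and Ksub: "K \<subseteq> std_simplex" and Kcomp: "compact K"
    and Knbhd: "\<exists>r>0. ball p0 r \<inter> std_simplex \<subseteq> K"
  shows "\<exists>\<delta>>0. \<forall>(\<pi> :: real ^ 'n \<Rightarrow> real ^ 'n) \<Phi>.
           generated_by \<pi> \<Phi> \<and> (\<forall>p\<in>K. \<bar>\<Phi> p - \<Phi>0 p\<bar> < \<delta>) \<longrightarrow>
           (SUP p\<in>{p\<in>std_simplex. norm (p - p0) < \<delta>}. norm (\<pi> p - \<pi>0 p0)) < \<epsilon>"
proof -
  obtain L where der: "(\<Phi>0 has_derivative L) (at p0 within std_simplex)"
    using diff unfolding differentiable_def by blast
  obtain r where r: "r > 0" "ball p0 r \<inter> std_simplex \<subseteq> K" using Knbhd by blast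
  obtain \<delta> where \<delta>: "\<delta> > 0"
    "\<And>(\<pi> :: real ^ 'n \<Rightarrow> real ^ 'n) \<Phi> p. generated_by \<pi> \<Phi> \<Longrightarrow> \<forall>q\<in>K. \<bar>\<Phi> q - \<Phi>0 q\<bar> < \<delta> \<Longrightarrow>
      p \<in> std_simplex \<Longrightarrow> norm (p - p0) < \<delta> \<Longrightarrow> dist (\<pi> p) (\<pi>0 p0) < \<epsilon> / 2"
    using generated_portfolios_uniformly_close[OF p0 der generated_by_pos[OF gen0 p0] r half_gt_zero[OF eps]]
    unfolding generated_portfolio_eq_derivative_portfolio[OF gen0 p0 der] by blast
  show ?thesis
  proof (intro exI[of _ \<delta>] conjI allI impI)
    fix \<pi> \<Phi> assume "generated_by \<pi> \<Phi> \<and> (\<forall>p\<in>K. \<bar>\<Phi> p - \<Phi>0 p\<bar> < \<delta>)"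
    then have "(SUP p\<in>{p\<in>std_simplex. norm (p - p0) < \<delta>}. norm (\<pi> p - \<pi>0 p0)) \<le> \<epsilon> / 2"
      using p0 \<delta> by (intro cSUP_least) (fastforce simp: dist_norm intro: less_imp_le)+
    then show "(SUP p\<in>{p\<in>std_simplex. norm (p - p0) < \<delta>}. norm (\<pi> p - \<pi>0 p0)) < \<epsilon>"
      using eps by linarith
  qed (rule \<delta>(1))
qed

end
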